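(* Assume only upper-bound group constraints and $\mathcal S\neq\emptyset$, and let $F$ be a maxmin-fair distribution over $\mathcal S$ for satisfaction $A=V$. Then $$\min_{u\in\mathcal U}F[u]\ =\ \min_{\emptyset\neq X\subseteq\mathcal U}\frac{H(X)}{|X|},\qquad\text{where } H(X)=\max_{r\in\mathcal S}\sum_{u\in X}V(r,u).$$
   Context: Ranking setting: $\mathcal U=\{u_1,\dots,u_n\}$ finite set of individuals partitioned into groups $C_1,\dots,C_t$; rankings are bijections $r:\mathcal U\to[n]$. Only upper bounds: $\mathcal S=\{r:\ |\{u\in C_k: r(u)\le i\}|\le u_i^k\ \forall i\in[n],k\in[t]\}$ for given integers $u_i^k$. $V(r,u)=f(r(u))-g(u)$ with $f:[n]\to\mathbb R$ non-increasing and $g:\mathcal U\to\mathbb R$ arbitrary. For a distribution $D$ over $\mathcal S$, $D[u]=\mathbb E_{r\sim D}[V(r,u)]$. $F$ is maxmin-fair if for every distribution $D$ over $\mathcal S$ and every $u$: $D[u]>F[u]$ implies there exists $v$ with $D[v]<F[v]\le F[u]$. *)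

theory Defs
  imports "HOL-Probability.Probability"
begin

text \<open>Rankings of the finite set U: bijections U -> {1..card U}; fixed to 0 outside U
  so that the set of rankings is finite.\<close>
definition rankings :: "'a set \<Rightarrow> ('a \<Rightarrow> nat) set" where
  "rankings U = {r. bij_betw r U {1..card U} \<and> (\<forall>u. u \<notin> U \<longrightarrow> r u = 0)}"

definition feasible :: "'a set \<Rightarrow> nat \<Rightarrow> (nat \<Rightarrow> 'a set) \<Rightarrow> (nat \<Rightarrow> nat \<Rightarrow> int) \<Rightarrow> ('a \<Rightarrow> nat) set" where
  "feasible U t C ub = {r \<in> rankings U.
     \<forall>i\<in>{1..card U}. \<forall>k\<in>{1..t}. int (card {u \<in> C k. r u \<le> i}) \<le> ub i k}"

definition Val :: "(nat \<Rightarrow> real) \<Rightarrow> ('a \<Rightarrow> real) \<Rightarrow> ('a \<Rightarrow> nat) \<Rightarrow> 'a \<Rightarrow> real" where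
  "Val f g r u = f (r u) - g u"

definition expval :: "(nat \<Rightarrow> real) \<Rightarrow> ('a \<Rightarrow> real) \<Rightarrow> ('a \<Rightarrow> nat) pmf \<Rightarrow> 'a \<Rightarrow> real" where
  "expval f g D u = measure_pmf.expectation D (\<lambda>r. Val f g r u)"

definition maxmin_fair :: "'a set \<Rightarrow> ('a \<Rightarrow> nat) set \<Rightarrow> (nat \<Rightarrow> real) \<Rightarrow> ('a \<Rightarrow> real) \<Rightarrow> ('a \<Rightarrow> nat) pmf \<Rightarrow> bool" where
  "maxmin_fair U S f g F \<longleftrightarrow> set_pmf F \<subseteq> S \<and>
     (\<forall>D. set_pmf D \<subseteq> S \<longrightarrow> (\<forall>u\<in>U. expval f g D u > expval f g F u \<longrightarrow>
        (\<exists>v\<in>U. expval f g D v < expval f g F v \<and> expval f g F v \<le> expval f g F u)))"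

definition Hval :: "('a \<Rightarrow> nat) set \<Rightarrow> (nat \<Rightarrow> real) \<Rightarrow> ('a \<Rightarrow> real) \<Rightarrow> 'a set \<Rightarrow> real" where
  "Hval S f g X = Max ((\<lambda>r. \<Sum>u\<in>X. Val f g r u) ` S)"

end

theory Submission
  imports Defs "HOL-Combinatorics.Transposition"
begin

text \<open>Since the values of X under any distribution over S sum to at most H(X), the least
  value min F is at most H(X)/|X| for every X. For the converse take for X the set L of
  worst-off individuals. Given a feasible ranking r and a set Y, a feasible ranking that places
  every member of Y no later than r does and minimises the sum of positions of Y cannot be
  improved by exchanging a member of Y with an earlier non-member; such a ranking puts at least
  as many members of Y into every prefix as any feasible ranking, so by Abel summation and
  monotonicity of f it maximises the total value of Y. Pushing F forward along this improvement
  for Y = L yields a distribution that is weakly better for everyone in L and gives L the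
  total H(L). Maxmin-fairness forbids improving any worst-off individual, hence
  H(L) is at most |L| min F.\<close>

lemma finite_rankings: "finite U \<Longrightarrow> finite (rankings U)"
proof -
  assume "finite U"
  moreover have "rankings U \<subseteq> {r. \<forall>x. (x \<in> U \<longrightarrow> r x \<in> {1..card U}) \<and> (x \<notin> U \<longrightarrow> r x = 0)}"
    unfolding rankings_def by (auto dest: bij_betwE)
  ultimately show ?thesis
    using finite_set_of_finite_funs[of U "{1..card U}" 0] finite_subset by blast
qed

lemma rankings_range: "r \<in> rankings U \<Longrightarrow> u \<in> U \<Longrightarrow> r u \<in> {1..card U}"
  unfolding rankings_def by (auto dest: bij_betwE)

lemma rankings_inj_on: "r \<in> rankings U \<Longrightarrow> inj_on r U"
  unfolding rankings_def by (auto simp: bij_betw_def)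

lemma rankings_surj:
  assumes "r \<in> rankings U" "i \<in> {1..card U}"
  shows "\<exists>u\<in>U. r u = i"
proof -
  have "r ` U = {1..card U}" using assms(1) by (simp add: rankings_def bij_betw_def)
  thus ?thesis using assms(2) by (metis imageE)
qed

lemma rankings_swap:
  assumes "r \<in> rankings U" "a \<in> U" "b \<in> U"
  shows "Fun.swap a b r \<in> rankings U"
proof -
  have "bij_betw (r \<circ> Transposition.transpose a b) U {1..card U}"
    using assms by (intro bij_betw_trans[of _ U]) (auto simp: rankings_def)
  moreover have "Transposition.transpose a b x = x" if "x \<notin> U" for x
    using that assms(2,3) by (auto simp: Transposition.transpose_def)
  ultimately show ?thesis
    using assms(1) by (auto simp: rankings_def)
qed

lemma card_swap_prefix:
  assumes "a \<in> A \<longleftrightarrow> b \<in> A"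
  shows "card {u\<in>A. Fun.swap a b r u \<le> j} = card {u\<in>A. r u \<le> j}"
proof -
  have "Transposition.transpose a b x \<in> A \<longleftrightarrow> x \<in> A" for x
    using assms by (auto simp: Transposition.transpose_def)
  hence "{u\<in>A. Fun.swap a b r u \<le> j} = Transposition.transpose a b ` {u\<in>A. r u \<le> j}"
    by (auto simp: in_transpose_image_iff)
  thus ?thesis by (simp add: card_image)
qed

lemma swap_lowers_ranks_on:
  fixes r :: "'a \<Rightarrow> nat"
  assumes "v \<notin> Y" "u \<in> Y" "r v < r u"
  shows "\<forall>x\<in>Y. Fun.swap v u r x \<le> r x"
  using assms by (auto simp: Transposition.transpose_def)

lemma sum_swap_less:
  fixes r :: "'a \<Rightarrow> nat"
  assumes "finite Y" "v \<notin> Y" "u \<in> Y" "r v < r u"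
  shows "sum (Fun.swap v u r) Y < sum r Y"
proof (rule sum_strict_mono_ex1[OF assms(1)])
  show "\<forall>x\<in>Y. Fun.swap v u r x \<le> r x" using swap_lowers_ranks_on[OF assms(2-4)] .
  show "\<exists>x\<in>Y. Fun.swap v u r x < r x"
    using assms(2-4) by (intro bexI[of _ u]) (auto simp: Transposition.transpose_def)
qed

lemma swap_le_iff_outside:
  fixes r :: "'a \<Rightarrow> nat"
  assumes "r v < r u" "j < r v \<or> r u \<le> j"
  shows "Fun.swap v u r x \<le> j \<longleftrightarrow> r x \<le> j"
  using assms by (cases "x = v"; cases "x = u") auto

lemma swap_le_imp_between:
  fixes r :: "'a \<Rightarrow> nat"
  assumes "j < r u" "Fun.swap v u r x \<le> j"
  shows "x = u \<or> r x \<le> j"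
  using assms by (cases "x = v"; cases "x = u") auto

lemma prefix_Suc_eq_insert:
  assumes "inj_on r Y" "v \<in> Y" "r v = Suc i"
  shows "{u\<in>Y. r u \<le> Suc i} = insert v {u\<in>Y. r u \<le> i}"
  using assms by (auto simp: le_Suc_eq inj_on_def)

lemma card_prefix_Suc_eq:
  assumes "inj_on r Y" "v \<in> Y" "r v = Suc i" "finite Y"
  shows "card {u\<in>Y. r u \<le> Suc i} = card {u\<in>Y. r u \<le> i} + 1"
  using assms by (simp add: prefix_Suc_eq_insert)

lemma card_prefix_Suc_le:
  assumes "inj_on r Y" "finite Y"
  shows "card {u\<in>Y. r u \<le> Suc i} \<le> card {u\<in>Y. r u \<le> i} + 1"
proof (cases "\<exists>v\<in>Y. r v = Suc i")
  case True
  thus ?thesis using assms card_prefix_Suc_eq by fastforce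
next
  case False
  hence "{u\<in>Y. r u \<le> Suc i} = {u\<in>Y. r u \<le> i}" by (auto simp: le_Suc_eq)
  thus ?thesis by simp
qed

lemma sum_by_prefix_counts:
  fixes f :: "nat \<Rightarrow> real"
  assumes "finite Y" "\<forall>u\<in>Y. a u \<in> {1..n}"
  shows "(\<Sum>u\<in>Y. f (a u))
    = real (card Y) * f n + (\<Sum>i\<in>{1..<n}. (f i - f (Suc i)) * real (card {u\<in>Y. a u \<le> i}))"
proof -
  have telescope: "f (a u) = f n + (\<Sum>i\<in>{1..<n}. if a u \<le> i then f i - f (Suc i) else 0)"
    if "u \<in> Y" for u
  proof -
    have le: "1 \<le> a u" "a u \<le> n" using assms(2) that by auto
    have "(\<Sum>i\<in>{1..<n}. if a u \<le> i then f i - f (Suc i) else 0) = (\<Sum>i\<in>{a u..<n}. f i - f (Suc i))"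
      using le by (intro sum.mono_neutral_cong_right) auto
    also have "\<dots> = f (a u) - f n"
      using sum_Suc_diff'[OF le(2), of f] by (simp add: sum_subtractf)
    finally show ?thesis by simp
  qed
  have "(\<Sum>u\<in>Y. f (a u)) = (\<Sum>u\<in>Y. f n + (\<Sum>i\<in>{1..<n}. if a u \<le> i then f i - f (Suc i) else 0))"
    using telescope by simp
  also have "\<dots> = real (card Y) * f n + (\<Sum>i\<in>{1..<n}. \<Sum>u\<in>Y. if a u \<le> i then f i - f (Suc i) else 0)"
    by (simp add: sum.distrib sum.swap[of _ Y])
  also have "\<dots> = real (card Y) * f n + (\<Sum>i\<in>{1..<n}. (f i - f (Suc i)) * real (card {u\<in>Y. a u \<le> i}))"
    using assms(1) by (simp add: sum.If_cases Int_def mult.commute)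
  finally show ?thesis .
qed

lemma sum_mono_prefix_counts:
  fixes f :: "nat \<Rightarrow> real"
  assumes "finite Y" "\<forall>u\<in>Y. a u \<in> {1..n}" "\<forall>u\<in>Y. b u \<in> {1..n}"
    and f_mono: "\<forall>i j. 1 \<le> i \<and> i \<le> j \<and> j \<le> n \<longrightarrow> f j \<le> f i"
    and counts: "\<forall>i. card {u\<in>Y. a u \<le> i} \<le> card {u\<in>Y. b u \<le> i}"
  shows "(\<Sum>u\<in>Y. f (a u)) \<le> (\<Sum>u\<in>Y. f (b u))"
proof -
  have "(\<Sum>i\<in>{1..<n}. (f i - f (Suc i)) * real (card {u\<in>Y. a u \<le> i}))
      \<le> (\<Sum>i\<in>{1..<n}. (f i - f (Suc i)) * real (card {u\<in>Y. b u \<le> i}))"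
    using f_mono counts by (intro sum_mono mult_left_mono) auto
  thus ?thesis
    using sum_by_prefix_counts[OF assms(1,2), of f] sum_by_prefix_counts[OF assms(1,3), of f] by linarith
qed

locale upper_bound_groups =
  fixes U :: "'a set" and t :: nat and C :: "nat \<Rightarrow> 'a set" and ub :: "nat \<Rightarrow> nat \<Rightarrow> int"
  assumes finite_U: "finite U"
    and groups_sub: "\<forall>k\<in>{1..t}. C k \<subseteq> U"
    and groups_cover: "(\<Union>k\<in>{1..t}. C k) = U"
    and groups_disj: "\<forall>k\<in>{1..t}. \<forall>l\<in>{1..t}. k \<noteq> l \<longrightarrow> C k \<inter> C l = {}"
begin

abbreviation S :: "('a \<Rightarrow> nat) set" where
  "S \<equiv> feasible U t C ub"

lemma finite_S: "finite S"
  using finite_rankings[OF finite_U] unfolding feasible_def by simp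

lemma feasible_rankings: "r \<in> S \<Longrightarrow> r \<in> rankings U"
  unfolding feasible_def by simp

lemma finite_group: "k \<in> {1..t} \<Longrightarrow> finite (C k)"
  using groups_sub finite_U finite_subset by blast

lemma feasibleI:
  assumes "r \<in> rankings U"
    and "\<And>i k. i \<in> {1..card U} \<Longrightarrow> k \<in> {1..t} \<Longrightarrow> int (card {u\<in>C k. r u \<le> i}) \<le> ub i k"
  shows "r \<in> S"
  using assms unfolding feasible_def by blast

lemma feasibleD:
  "r \<in> S \<Longrightarrow> i \<in> {1..card U} \<Longrightarrow> k \<in> {1..t} \<Longrightarrow> int (card {u\<in>C k. r u \<le> i}) \<le> ub i k"
  unfolding feasible_def by blast

lemma feasible_swap_same_group:
  assumes r: "r \<in> S" and k: "k \<in> {1..t}" and ab: "a \<in> C k" "b \<in> C k"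
  shows "Fun.swap a b r \<in> S"
proof (rule feasibleI)
  show "Fun.swap a b r \<in> rankings U"
    using rankings_swap[OF feasible_rankings[OF r]] groups_sub k ab by blast
  fix i k' assume i: "i \<in> {1..card U}" and k': "k' \<in> {1..t}"
  have "a \<in> C k' \<longleftrightarrow> b \<in> C k'"
  proof (cases "k' = k")
    case False
    hence "C k \<inter> C k' = {}" using groups_disj k k' by simp
    thus ?thesis using ab by blast
  qed (use ab in blast)
  thus "int (card {u\<in>C k'. Fun.swap a b r u \<le> i}) \<le> ub i k'"
    using feasibleD[OF r i k'] card_swap_prefix[of a "C k'" b r i] by simp
qed

text \<open>Moving the first member u of group k behind position r v up to that position adds at
  most one member of group k to each prefix between the two positions.\<close>
lemma feasible_swap_forward:
  assumes r: "r \<in> S" and k: "k \<in> {1..t}"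
    and vu: "v \<in> U" "u \<in> C k" "r v < r u"
    and first: "\<forall>x\<in>C k. r v < r x \<longrightarrow> r u \<le> r x"
    and room: "\<forall>j. r v \<le> j \<and> j \<le> card U \<longrightarrow> int (card {x\<in>C k. r x \<le> r v}) + 1 \<le> ub j k"
  shows "Fun.swap v u r \<in> S"
proof (rule feasibleI)
  show "Fun.swap v u r \<in> rankings U"
    using rankings_swap[OF feasible_rankings[OF r] vu(1)] groups_sub k vu(2) by blast
  fix j k' assume j: "j \<in> {1..card U}" and k': "k' \<in> {1..t}"
  have old: "int (card {x\<in>C k'. r x \<le> j}) \<le> ub j k'" using feasibleD[OF r j k'] .
  have fin: "finite (C k')" using finite_group[OF k'] .
  show "int (card {x\<in>C k'. Fun.swap v u r x \<le> j}) \<le> ub j k'"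
  proof (cases "j < r v \<or> r u \<le> j")
    case True
    hence "{x\<in>C k'. Fun.swap v u r x \<le> j} = {x\<in>C k'. r x \<le> j}"
      using swap_le_iff_outside[of r v u j, OF vu(3) True] by blast
    thus ?thesis using old by simp
  next
    case between: False
    have new_top: "{x\<in>C k'. Fun.swap v u r x \<le> j} \<subseteq> insert u {x\<in>C k'. r x \<le> j}"
      using swap_le_imp_between[of j r u v] between by auto
    show ?thesis
    proof (cases "k' = k")
      case True
      have "r x \<le> r v" if "x \<in> C k" "r x \<le> j" for x
        using first[rule_format, OF that(1)] that(2) between by linarith
      hence "{x\<in>C k'. Fun.swap v u r x \<le> j} \<subseteq> insert u {x\<in>C k. r x \<le> r v}"
        using new_top True by blast
      moreover have fin_top: "finite {x\<in>C k. r x \<le> r v}" using finite_group[OF k] by simp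
      ultimately have "card {x\<in>C k'. Fun.swap v u r x \<le> j} \<le> card (insert u {x\<in>C k. r x \<le> r v})"
        by (intro card_mono) auto
      also have "\<dots> \<le> card {x\<in>C k. r x \<le> r v} + 1"
        using fin_top by (simp add: card_insert_if)
      finally have "int (card {x\<in>C k'. Fun.swap v u r x \<le> j}) \<le> int (card {x\<in>C k. r x \<le> r v}) + 1"
        by linarith
      also have "\<dots> \<le> ub j k" using room between j by auto
      finally show ?thesis using True by simp
    next
      case False
      hence "u \<notin> C k'" using groups_disj k k' vu(2) by blast
      hence "{x\<in>C k'. Fun.swap v u r x \<le> j} \<subseteq> {x\<in>C k'. r x \<le> j}" using new_top by blast
      hence "card {x\<in>C k'. Fun.swap v u r x \<le> j} \<le> card {x\<in>C k'. r x \<le> j}"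
        using fin by (intro card_mono) auto
      thus ?thesis using old by linarith
    qed
  qed
qed

lemma card_prefix_groups:
  assumes "Y \<subseteq> U"
  shows "card {u\<in>Y. r u \<le> i} = (\<Sum>k\<in>{1..t}. card {u\<in>C k. u \<in> Y \<and> r u \<le> i})"
proof -
  have "{u\<in>Y. r u \<le> i} = (\<Union>k\<in>{1..t}. {u\<in>C k. u \<in> Y \<and> r u \<le> i})"
    using assms groups_cover by auto
  moreover have "card (\<Union>k\<in>{1..t}. {u\<in>C k. u \<in> Y \<and> r u \<le> i})
      = (\<Sum>k\<in>{1..t}. card {u\<in>C k. u \<in> Y \<and> r u \<le> i})"
    using finite_group groups_disj by (intro card_UN_disjoint) auto
  ultimately show ?thesis by simp
qed

lemma exists_forward_swap:
  assumes r: "r \<in> S" and s: "s \<in> S" and k: "k \<in> {1..t}" and v: "v \<in> U"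
    and sorted: "\<forall>w\<in>C k - Y. \<forall>x\<in>C k \<inter> Y. \<not> r w < r x"
    and more: "card {x\<in>C k. x \<in> Y \<and> r x \<le> r v} < card {x\<in>C k. x \<in> Y \<and> s x \<le> r v}"
  shows "\<exists>u\<in>C k \<inter> Y. r v < r u \<and> Fun.swap v u r \<in> S"
proof -
  have r_rank: "r \<in> rankings U" using feasible_rankings[OF r] .
  have fin: "finite (C k)" using finite_group[OF k] .
  have CkU: "C k \<subseteq> U" using groups_sub k by blast
  have "\<exists>u0\<in>C k \<inter> Y. r v < r u0"
  proof (rule ccontr)
    assume "\<not> ?thesis"
    hence "{x\<in>C k. x \<in> Y \<and> s x \<le> r v} \<subseteq> {x\<in>C k. x \<in> Y \<and> r x \<le> r v}"
      by (auto simp: not_less)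
    hence "card {x\<in>C k. x \<in> Y \<and> s x \<le> r v} \<le> card {x\<in>C k. x \<in> Y \<and> r x \<le> r v}"
      using fin by (intro card_mono) auto
    thus False using more by simp
  qed
  then obtain u0 where u0: "u0 \<in> C k \<inter> Y" "r v < r u0" by blast
  obtain u where u: "u \<in> C k" "r v < r u" and first: "\<forall>x\<in>C k. r v < r x \<longrightarrow> r u \<le> r x"
    using ex_has_least_nat[of "\<lambda>x. x \<in> C k \<and> r v < r x" u0 r] u0 by blast
  have uY: "u \<in> Y"
  proof (rule ccontr)
    assume "u \<notin> Y"
    hence "u \<noteq> u0" using u0 by blast
    hence "r u \<noteq> r u0" using inj_onD[OF rankings_inj_on[OF r_rank]] u(1) u0(1) CkU by blast
    hence "r u < r u0" using first u0 by force
    thus False using sorted \<open>u \<notin> Y\<close> u(1) u0(1) by blast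
  qed
  have top_in_Y: "{x\<in>C k. r x \<le> r v} = {x\<in>C k. x \<in> Y \<and> r x \<le> r v}"
  proof -
    have "x \<in> Y" if "x \<in> C k" "r x \<le> r v" for x
      using sorted u0 that by (metis DiffI IntI le_less_trans)
    thus ?thesis by blast
  qed
  have room: "\<forall>j. r v \<le> j \<and> j \<le> card U \<longrightarrow> int (card {x\<in>C k. r x \<le> r v}) + 1 \<le> ub j k"
  proof (intro allI impI)
    fix j assume j: "r v \<le> j \<and> j \<le> card U"
    have "card {x\<in>C k. r x \<le> r v} + 1 \<le> card {x\<in>C k. x \<in> Y \<and> s x \<le> r v}"
      using more top_in_Y by simp
    also have "\<dots> \<le> card {x\<in>C k. s x \<le> j}"
      using fin j by (intro card_mono) auto
    finally have "int (card {x\<in>C k. r x \<le> r v}) + 1 \<le> int (card {x\<in>C k. s x \<le> j})"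
      by linarith
    also have "\<dots> \<le> ub j k"
      using feasibleD[OF s _ k] rankings_range[OF r_rank v] j by auto
    finally show "int (card {x\<in>C k. r x \<le> r v}) + 1 \<le> ub j k" .
  qed
  have "Fun.swap v u r \<in> S"
    using feasible_swap_forward[OF r k v u(1,2) first room] .
  thus ?thesis using u uY by blast
qed

lemma swap_stable_dominates:
  assumes r: "r \<in> S" and Y: "Y \<subseteq> U" and s: "s \<in> S"
    and stable: "\<forall>v u. v \<notin> Y \<longrightarrow> u \<in> Y \<longrightarrow> r v < r u \<longrightarrow> Fun.swap v u r \<notin> S"
  shows "card {u\<in>Y. s u \<le> i} \<le> card {u\<in>Y. r u \<le> i}"
proof (induction i)
  case 0
  have "{u\<in>Y. s u \<le> 0} = {}"
    using rankings_range[OF feasible_rankings[OF s]] Y by fastforce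
  thus ?case by (metis card.empty le0)
next
  case (Suc i)
  have r_rank: "r \<in> rankings U" and s_rank: "s \<in> rankings U"
    using r s by (simp_all add: feasible_rankings)
  have finY: "finite Y" using Y finite_U finite_subset by blast
  have "card U < Suc i \<or> (\<exists>v\<in>U. r v = Suc i)"
    using rankings_surj[OF r_rank, of "Suc i"] by (cases "card U < Suc i") auto
  then consider (beyond) "card U < Suc i" | (in_Y) v where "v \<in> Y" "r v = Suc i"
    | (not_in_Y) v where "v \<in> U" "v \<notin> Y" "r v = Suc i"
    by blast
  thus ?case
  proof cases
    case beyond
    hence "{u\<in>Y. r u \<le> Suc i} = Y"
      using rankings_range[OF r_rank] Y by fastforce
    thus ?thesis using finY by (simp add: card_mono)
  next
    case in_Y
    have "card {u\<in>Y. s u \<le> Suc i} \<le> card {u\<in>Y. s u \<le> i} + 1"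
      using card_prefix_Suc_le[OF inj_on_subset[OF rankings_inj_on[OF s_rank] Y] finY] .
    also have "\<dots> \<le> card {u\<in>Y. r u \<le> Suc i}"
      using Suc.IH card_prefix_Suc_eq[OF inj_on_subset[OF rankings_inj_on[OF r_rank] Y] in_Y finY]
      by linarith
    finally show ?thesis .
  next
    case not_in_Y
    have sorted: "\<forall>w\<in>C k - Y. \<forall>x\<in>C k \<inter> Y. \<not> r w < r x" if k: "k \<in> {1..t}" for k
      using stable feasible_swap_same_group[OF r k] by blast
    show ?thesis
    proof (rule ccontr)
      assume "\<not> ?thesis"
      hence "(\<Sum>k\<in>{1..t}. card {x\<in>C k. x \<in> Y \<and> r x \<le> r v})
          < (\<Sum>k\<in>{1..t}. card {x\<in>C k. x \<in> Y \<and> s x \<le> r v})"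
        using card_prefix_groups[OF Y, of r "Suc i"] card_prefix_groups[OF Y, of s "Suc i"] not_in_Y(3)
        by (simp add: not_le)
      hence "\<exists>k\<in>{1..t}. card {x\<in>C k. x \<in> Y \<and> r x \<le> r v} < card {x\<in>C k. x \<in> Y \<and> s x \<le> r v}"
        by (metis (no_types, lifting) leD not_le_imp_less sum_mono)
      then obtain k where k: "k \<in> {1..t}"
        and "card {x\<in>C k. x \<in> Y \<and> r x \<le> r v} < card {x\<in>C k. x \<in> Y \<and> s x \<le> r v}"
        by blast
      then obtain u where "u \<in> Y" "r v < r u" "Fun.swap v u r \<in> S"
        using exists_forward_swap[OF r s k not_in_Y(1) sorted[OF k]] by blast
      thus False using stable not_in_Y by blast
    qed
  qed
qed

lemma exists_dominating_ranking:
  assumes r: "r \<in> S" and Y: "Y \<subseteq> U"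
  shows "\<exists>r0\<in>S. (\<forall>u\<in>Y. r0 u \<le> r u) \<and> (\<forall>s\<in>S. \<forall>i. card {u\<in>Y. s u \<le> i} \<le> card {u\<in>Y. r0 u \<le> i})"
proof -
  let ?T = "{r'\<in>S. \<forall>u\<in>Y. r' u \<le> r u}"
  have "r \<in> ?T" using r by simp
  then obtain r0 where r0: "r0 \<in> ?T" and min: "\<forall>r'\<in>?T. sum r0 Y \<le> sum r' Y"
    using ex_has_least_nat[of "\<lambda>r'. r' \<in> ?T" r "\<lambda>r'. sum r' Y"] by blast
  have finY: "finite Y" using Y finite_U finite_subset by blast
  have "Fun.swap v u r0 \<notin> S" if "v \<notin> Y" "u \<in> Y" "r0 v < r0 u" for v u
  proof
    assume "Fun.swap v u r0 \<in> S"
    moreover have "\<forall>x\<in>Y. Fun.swap v u r0 x \<le> r x"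
      using swap_lowers_ranks_on[OF that] r0 by fastforce
    ultimately have "sum r0 Y \<le> sum (Fun.swap v u r0) Y" using min by blast
    thus False using sum_swap_less[OF finY that] by simp
  qed
  thus ?thesis using swap_stable_dominates[OF _ Y] r0 by blast
qed

lemma exists_optimal_improvement:
  fixes f :: "nat \<Rightarrow> real"
  assumes f_mono: "\<forall>i j. 1 \<le> i \<and> i \<le> j \<and> j \<le> card U \<longrightarrow> f j \<le> f i"
    and r: "r \<in> S" and Y: "Y \<subseteq> U"
  shows "\<exists>r0\<in>S. (\<forall>u\<in>Y. r0 u \<le> r u) \<and> (\<forall>s\<in>S. (\<Sum>u\<in>Y. f (s u)) \<le> (\<Sum>u\<in>Y. f (r0 u)))"
proof -
  obtain r0 where r0: "r0 \<in> S" "\<forall>u\<in>Y. r0 u \<le> r u"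
    and dom: "\<forall>s\<in>S. \<forall>i. card {u\<in>Y. s u \<le> i} \<le> card {u\<in>Y. r0 u \<le> i}"
    using exists_dominating_ranking[OF r Y] by blast
  have finY: "finite Y" using Y finite_U finite_subset by blast
  have ranks: "\<forall>u\<in>Y. q u \<in> {1..card U}" if "q \<in> S" for q
    using rankings_range[OF feasible_rankings[OF that]] Y by blast
  have "(\<Sum>u\<in>Y. f (s u)) \<le> (\<Sum>u\<in>Y. f (r0 u))" if "s \<in> S" for s
    using sum_mono_prefix_counts[OF finY ranks[OF that] ranks[OF r0(1)] f_mono] dom that by blast
  thus ?thesis using r0 by blast
qed

end

definition minimizers :: "'a set \<Rightarrow> ('a \<Rightarrow> real) \<Rightarrow> 'a set" where
  "minimizers U e = {u\<in>U. e u = Min (e ` U)}"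

lemma minimizers_subset: "minimizers U e \<subseteq> U"
  unfolding minimizers_def by blast

lemma minimizers_nonempty:
  assumes "finite U" "U \<noteq> {}"
  shows "minimizers U e \<noteq> {}"
proof -
  have "Min (e ` U) \<in> e ` U" using assms by (intro Min_in) auto
  thus ?thesis unfolding minimizers_def by auto
qed

lemma expval_eq_sum:
  assumes "finite S" "set_pmf D \<subseteq> S"
  shows "expval f g D u = (\<Sum>r\<in>S. pmf D r * Val f g r u)"
  unfolding expval_def using assms(2)
  by (subst integral_measure_pmf_real[OF assms(1)]) (auto simp: mult.commute)

lemma sum_expval_eq:
  assumes "finite S" "set_pmf D \<subseteq> S"
  shows "(\<Sum>u\<in>X. expval f g D u) = (\<Sum>r\<in>S. pmf D r * (\<Sum>u\<in>X. Val f g r u))"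
  using assms by (simp add: expval_eq_sum sum_distrib_left sum.swap[of _ X])

lemma sum_expval_le_Hval:
  assumes "finite S" "set_pmf D \<subseteq> S"
  shows "(\<Sum>u\<in>X. expval f g D u) \<le> Hval S f g X"
proof -
  have "(\<Sum>u\<in>X. expval f g D u) \<le> (\<Sum>r\<in>S. pmf D r * Hval S f g X)"
    unfolding sum_expval_eq[OF assms] Hval_def
    using assms(1) by (intro sum_mono mult_left_mono Max_ge) auto
  also have "\<dots> = Hval S f g X"
    using sum_pmf_eq_1[OF assms] by (simp add: sum_distrib_right[symmetric])
  finally show ?thesis .
qed

lemma sum_expval_eq_Hval:
  assumes "finite S" "set_pmf D \<subseteq> S"
    and opt: "\<forall>r\<in>set_pmf D. \<forall>s\<in>S. (\<Sum>u\<in>X. Val f g s u) \<le> (\<Sum>u\<in>X. Val f g r u)"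
  shows "(\<Sum>u\<in>X. expval f g D u) = Hval S f g X"
proof -
  have "pmf D r * (\<Sum>u\<in>X. Val f g r u) = pmf D r * Hval S f g X" for r
  proof (cases "r \<in> set_pmf D")
    case True
    hence "Hval S f g X = (\<Sum>u\<in>X. Val f g r u)"
      unfolding Hval_def using assms True by (intro Max_eqI) auto
    thus ?thesis by simp
  qed (simp add: set_pmf_eq)
  hence "(\<Sum>u\<in>X. expval f g D u) = (\<Sum>r\<in>S. pmf D r * Hval S f g X)"
    unfolding sum_expval_eq[OF assms(1,2)] by (intro sum.cong) auto
  also have "\<dots> = Hval S f g X"
    using sum_pmf_eq_1[OF assms(1,2)] by (simp add: sum_distrib_right[symmetric])
  finally show ?thesis .
qed

lemma expval_map_pmf_mono:
  assumes "finite S" "set_pmf F \<subseteq> S"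
    and "\<forall>r\<in>set_pmf F. Val f g r u \<le> Val f g (\<phi> r) u"
  shows "expval f g F u \<le> expval f g (map_pmf \<phi> F) u"
proof -
  have "expval f g (map_pmf \<phi> F) u = (\<Sum>r\<in>S. Val f g (\<phi> r) u * pmf F r)"
    unfolding expval_def using assms(2) by (auto intro: integral_measure_pmf_real[OF assms(1)])
  moreover have "expval f g F u = (\<Sum>r\<in>S. Val f g r u * pmf F r)"
    unfolding expval_def using assms(2) by (auto intro: integral_measure_pmf_real[OF assms(1)])
  moreover have "Val f g r u * pmf F r \<le> Val f g (\<phi> r) u * pmf F r" for r
    using assms(3) by (cases "r \<in> set_pmf F") (auto simp: set_pmf_eq intro: mult_right_mono)
  ultimately show ?thesis by (simp add: sum_mono)
qed

lemma Min_expval_le_Hval_ratio: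
  assumes "finite U" "X \<subseteq> U" "X \<noteq> {}" "finite S" "set_pmf F \<subseteq> S"
  shows "Min (expval f g F ` U) \<le> Hval S f g X / real (card X)"
proof -
  have finX: "finite X" using assms(1,2) finite_subset by blast
  have "real (card X) * Min (expval f g F ` U) = (\<Sum>u\<in>X. Min (expval f g F ` U))" by simp
  also have "\<dots> \<le> (\<Sum>u\<in>X. expval f g F u)"
    using assms(1,2) by (intro sum_mono Min_le) auto
  also have "\<dots> \<le> Hval S f g X" using sum_expval_le_Hval[OF assms(4,5)] .
  finally show ?thesis
    using finX assms(3) by (simp add: pos_le_divide_eq card_gt_0_iff mult.commute)
qed

text \<open>An improvement for one worst-off individual would, by fairness, have to be paid for by
  someone no better off, i.e. by another worst-off individual.\<close>
lemma maxmin_fair_minimizers_not_improvable: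
  assumes fair: "maxmin_fair U S f g F" and "finite U" "set_pmf D \<subseteq> S"
    and dom: "\<forall>v\<in>minimizers U (expval f g F). expval f g F v \<le> expval f g D v"
    and u: "u \<in> minimizers U (expval f g F)"
  shows "expval f g D u \<le> expval f g F u"
proof (rule ccontr)
  assume "\<not> ?thesis"
  then obtain v where v: "v \<in> U" "expval f g D v < expval f g F v" "expval f g F v \<le> expval f g F u"
    using fair assms(3) u unfolding maxmin_fair_def minimizers_def
    by (metis (no_types, lifting) mem_Collect_eq not_le)
  have "v \<in> minimizers U (expval f g F)"
    using v u Min_le[of "expval f g F ` U"] assms(2) unfolding minimizers_def
    by (auto intro: antisym)
  thus False using dom v(2) by fastforce
qed

context upper_bound_groups
begin

lemma Hval_ratio_minimizers_le_Min:
  assumes f_mono: "\<forall>i j. 1 \<le> i \<and> i \<le> j \<and> j \<le> card U \<longrightarrow> f j \<le> f i"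
    and fair: "maxmin_fair U S f g F" and U: "U \<noteq> {}"
  defines "L \<equiv> minimizers U (expval f g F)"
  shows "Hval S f g L / real (card L) \<le> Min (expval f g F ` U)"
proof -
  have suppF: "set_pmf F \<subseteq> S" using fair unfolding maxmin_fair_def by blast
  have LU: "L \<subseteq> U" unfolding L_def by (rule minimizers_subset)
  obtain \<phi> where \<phi>_S: "\<forall>r\<in>S. \<phi> r \<in> S" and \<phi>_le: "\<forall>r\<in>S. \<forall>u\<in>L. \<phi> r u \<le> r u"
    and \<phi>_opt: "\<forall>r\<in>S. \<forall>s\<in>S. (\<Sum>u\<in>L. f (s u)) \<le> (\<Sum>u\<in>L. f (\<phi> r u))"
    using exists_optimal_improvement[OF f_mono _ LU] by metis
  define D where "D = map_pmf \<phi> F"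
  have suppD: "set_pmf D \<subseteq> S" unfolding D_def using suppF \<phi>_S by auto
  have "Val f g r u \<le> Val f g (\<phi> r) u" if "r \<in> S" "u \<in> L" for r u
  proof -
    have "1 \<le> \<phi> r u" "r u \<le> card U"
      using rankings_range[OF feasible_rankings] \<phi>_S that LU by fastforce+
    thus ?thesis using f_mono \<phi>_le that unfolding Val_def by auto
  qed
  hence "\<forall>u\<in>L. expval f g F u \<le> expval f g D u"
    unfolding D_def using expval_map_pmf_mono[OF finite_S suppF] suppF by blast
  hence D_le_F: "\<forall>u\<in>L. expval f g D u \<le> expval f g F u"
    using maxmin_fair_minimizers_not_improvable[OF fair finite_U suppD] unfolding L_def by blast
  have "\<forall>r\<in>set_pmf D. \<forall>s\<in>S. (\<Sum>u\<in>L. Val f g s u) \<le> (\<Sum>u\<in>L. Val f g r u)"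
    unfolding D_def Val_def using \<phi>_opt suppF by (auto simp: sum_subtractf)
  hence "Hval S f g L = (\<Sum>u\<in>L. expval f g D u)"
    using sum_expval_eq_Hval[OF finite_S suppD] by simp
  also have "\<dots> \<le> (\<Sum>u\<in>L. expval f g F u)" using D_le_F by (intro sum_mono) auto
  also have "\<dots> = real (card L) * Min (expval f g F ` U)"
    unfolding L_def minimizers_def by simp
  finally show ?thesis
    using minimizers_nonempty[OF finite_U U] finite_subset[OF LU finite_U]
    unfolding L_def by (simp add: pos_divide_le_eq card_gt_0_iff mult.commute)
qed

end

theorem mainTheorem12:
  fixes U :: "'a set" and t :: nat and C :: "nat \<Rightarrow> 'a set"
    and ub :: "nat \<Rightarrow> nat \<Rightarrow> int" and f :: "nat \<Rightarrow> real" and g :: "'a \<Rightarrow> real"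
    and F :: "('a \<Rightarrow> nat) pmf"
  assumes finU: "finite U"
    and groups_sub: "\<forall>k\<in>{1..t}. C k \<subseteq> U"
    and groups_cover: "(\<Union>k\<in>{1..t}. C k) = U"
    and groups_disj: "\<forall>k\<in>{1..t}. \<forall>l\<in>{1..t}. k \<noteq> l \<longrightarrow> C k \<inter> C l = {}"
    and f_mono: "\<forall>i j. 1 \<le> i \<and> i \<le> j \<and> j \<le> card U \<longrightarrow> f j \<le> f i"
    and S_ne: "feasible U t C ub \<noteq> {}"
    and fair: "maxmin_fair U (feasible U t C ub) f g F"
  shows "Min ((\<lambda>u. expval f g F u) ` U)
       = Min ((\<lambda>X. Hval (feasible U t C ub) f g X / real (card X)) ` {X. X \<subseteq> U \<and> X \<noteq> {}})"
proof (cases "U = {}")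
  case False
  interpret upper_bound_groups U t C ub
    using finU groups_sub groups_cover groups_disj by unfold_locales
  let ?R = "(\<lambda>X. Hval S f g X / real (card X)) ` {X. X \<subseteq> U \<and> X \<noteq> {}}"
  have finR: "finite ?R" using finU by simp
  have suppF: "set_pmf F \<subseteq> S" using fair unfolding maxmin_fair_def by blast
  have "Min (expval f g F ` U) \<le> Min ?R"
    using Min_expval_le_Hval_ratio[OF finU _ _ finite_S suppF] finR False by (intro Min.boundedI) auto
  moreover have "Min ?R \<le> Min (expval f g F ` U)"
  proof -
    let ?L = "minimizers U (expval f g F)"
    have "?L \<subseteq> U" "?L \<noteq> {}"
      by (rule minimizers_subset, rule minimizers_nonempty[OF finU False])
    hence "Min ?R \<le> Hval S f g ?L / real (card ?L)" using finR by (intro Min_le) auto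
    also have "\<dots> \<le> Min (expval f g F ` U)" using Hval_ratio_minimizers_le_Min[OF f_mono fair False] .
    finally show ?thesis .
  qed
  ultimately show ?thesis by simp
qed simp

end
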